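(* The manifold with corners $M:=[0,\infty[$ does not admit a local addition in Michor's sense, i.e., there is no smooth map $\tau\colon {}^iTM\to M$ such that (A1) $(\tau,\pi_{TM})\colon{}^iTM\to M\times M$ is a diffeomorphism onto an open neighbourhood of the diagonal in $M\times M$, and (A2) $\tau(0_x)=x$ for all $x\in M$.
   Context: Identify $TM$ with $M\times\mathbb R$ and $\pi_{TM}(x,y)=x$. The set of inner tangent vectors is ${}^iTM=(\{0\}\times[0,\infty[)\cup(]0,\infty[\times\mathbb R)$ (the tangent vectors $\dot\gamma(0)$ of smooth curves $\gamma\colon[0,1[\,\to M$), a convex subset of $\mathbb R^2$ with dense interior; $0_x=(x,0)$. Smoothness on such sets: a map $f$ on a locally convex subset $U$ of $\mathbb R^m$ with dense interior is $C^1$ if it is continuous, $C^1$ on the interior, and its differential extends continuously to $U\times\mathbb R^m$; $C^k$ inductively; smooth means $C^k$ for all $k$. A diffeomorphism is a smooth bijection with smooth inverse. *)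

theory Defs
  imports "HOL-Analysis.Analysis"
begin

definition lc_dense :: "'a::euclidean_space set \<Rightarrow> bool" where
  "lc_dense U \<longleftrightarrow> U \<subseteq> closure (interior U) \<and>
     (\<forall>x\<in>U. \<exists>V. open V \<and> x \<in> V \<and> convex (U \<inter> V))"

fun iter_dir :: "('a::real_normed_vector \<Rightarrow> 'b::real_normed_vector) \<Rightarrow> 'a list \<Rightarrow> 'a \<Rightarrow> 'b" where
  "iter_dir f [] = f"
| "iter_dir f (v # vs) = (\<lambda>x. frechet_derivative (iter_dir f vs) (at x) v)"

definition smooth_lc :: "'a::euclidean_space set \<Rightarrow> ('a \<Rightarrow> 'b::euclidean_space) \<Rightarrow> bool" where
  "smooth_lc U f \<longleftrightarrow> lc_dense U \<and> continuous_on U f \<and>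
     (\<forall>vs. \<forall>x\<in>interior U. iter_dir f vs differentiable (at x)) \<and>
     (\<forall>vs. \<exists>g. continuous_on U g \<and> (\<forall>x\<in>interior U. g x = iter_dir f vs x))"

definition diffeo_betw :: "'a::euclidean_space set \<Rightarrow> 'b::euclidean_space set \<Rightarrow> ('a \<Rightarrow> 'b) \<Rightarrow> bool" where
  "diffeo_betw U V f \<longleftrightarrow> bij_betw f U V \<and> smooth_lc U f \<and> smooth_lc V (inv_into U f)"

end

theory Submission
  imports Defs
begin

text \<open>The obstruction is purely topological. An open subset of the closed set \<open>M \<times> M\<close> is locally
  compact, and local compactness is preserved by homeomorphisms. But \<open>\<^sup>iTM\<close> is not locally compact
  at the origin: every closed ball around \<open>(0, 0)\<close> meets \<open>\<^sup>iTM\<close> in a set whose closure contains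
  points \<open>(0, y)\<close> with \<open>y < 0\<close>, the limits of \<open>(t, y)\<close> as \<open>t \<rightarrow> 0\<^sup>+\<close>. So not even
  condition (A1) can be met.\<close>

lemma not_locally_compact_inner_tangent:
  "\<not> locally compact ({0} \<times> {0..} \<union> {0<..} \<times> UNIV :: (real \<times> real) set)"
    (is "\<not> locally compact ?S")
proof
  assume "locally compact ?S"
  moreover have "0 \<in> ?S"
    by (simp add: zero_prod_def)
  ultimately obtain e where "e > 0" and closed: "closed (cball 0 e \<inter> ?S)"
    by (meson locally_compact_Int_cball)
  define p :: "real \<times> real" where "p = (0, - e / 2)"
  have "p \<in> closure (cball 0 e \<inter> ?S)"
  proof (rule closure_approachable[THEN iffD2], intro allI impI)
    fix \<epsilon> :: real assume "\<epsilon> > 0"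
    define t where "t = min (\<epsilon> / 2) (e / 2)"
    have t: "0 < t" "t \<le> e / 2" "t < \<epsilon>"
      using \<open>e > 0\<close> \<open>\<epsilon> > 0\<close> by (auto simp: t_def)
    have "norm (t, - e / 2) \<le> \<bar>t\<bar> + \<bar>- e / 2\<bar>"
      unfolding norm_Pair real_norm_def power2_abs by (rule sqrt_sum_squares_le_sum_abs)
    then have "(t, - e / 2) \<in> cball 0 e \<inter> ?S"
      using t \<open>e > 0\<close> by simp
    moreover have "dist (t, - e / 2) p < \<epsilon>"
      using t by (simp add: p_def dist_Pair_Pair dist_real_def)
    ultimately show "\<exists>y\<in>cball 0 e \<inter> ?S. dist y p < \<epsilon>" by blast
  qed
  then have "p \<in> ?S"
    using closure_closed[OF closed] by blast
  moreover have "p \<notin> ?S"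
    using \<open>e > 0\<close> by (simp add: p_def)
  ultimately show False
    by blast
qed

lemma diffeo_betw_imp_homeomorphism:
  assumes "diffeo_betw U V f"
  shows "homeomorphism U V f (inv_into U f)"
  using assms unfolding diffeo_betw_def smooth_lc_def homeomorphism_def bij_betw_def
  by (auto simp: f_inv_into_f)

theorem propositionA2:
  fixes M :: "real set" and iTM :: "(real \<times> real) set"
  assumes "M = {0..}"
    and "iTM = ({0} \<times> {0..}) \<union> ({0<..} \<times> UNIV)"
  shows "\<not> (\<exists>\<tau> :: real \<times> real \<Rightarrow> real.
            smooth_lc iTM \<tau> \<and> \<tau> ` iTM \<subseteq> M \<and>
            (\<exists>W. openin (top_of_set (M \<times> M)) W \<and> (\<forall>x\<in>M. (x, x) \<in> W) \<and>
                 diffeo_betw iTM W (\<lambda>v. (\<tau> v, fst v))) \<and>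
            (\<forall>x\<in>M. \<tau> (x, 0) = x))"
proof
  assume "\<exists>\<tau> :: real \<times> real \<Rightarrow> real.
            smooth_lc iTM \<tau> \<and> \<tau> ` iTM \<subseteq> M \<and>
            (\<exists>W. openin (top_of_set (M \<times> M)) W \<and> (\<forall>x\<in>M. (x, x) \<in> W) \<and>
                 diffeo_betw iTM W (\<lambda>v. (\<tau> v, fst v))) \<and>
            (\<forall>x\<in>M. \<tau> (x, 0) = x)"
  then obtain \<tau> :: "real \<times> real \<Rightarrow> real" and W
    where W: "openin (top_of_set (M \<times> M)) W"
      and diffeo: "diffeo_betw iTM W (\<lambda>v. (\<tau> v, fst v))"
    by blast
  have "iTM homeomorphic W"
    unfolding homeomorphic_def using diffeo_betw_imp_homeomorphism[OF diffeo] by blast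
  moreover have "locally compact W"
    by (rule locally_open_subset[OF closed_imp_locally_compact W])
      (simp add: \<open>M = {0..}\<close> closed_Times)
  ultimately have "locally compact iTM"
    by (simp add: homeomorphic_local_compactness)
  with not_locally_compact_inner_tangent show False
    by (simp only: \<open>iTM = ({0} \<times> {0..}) \<union> ({0<..} \<times> UNIV)\<close>)
qed

end
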